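(* Let $d_{CC}$ be the CC metric on $H(\mathbb{R})$ induced by the $\ell^1$ norm on $\mathbb{R}^2$, and $|\cdot|_{\sf std}$ the word length on $H(\mathbb{Z})$ with respect to ${\sf std}=\{\pm{\sf e}_1,\pm{\sf e}_2\}$. Fix $(x,y)\in\mathbb{Z}^2$. For $z\ge0$ with $z\in\mathbb{Z}+\epsilon(x,y)$, let $n$ be the unique integer with the same parity as $x+y$ such that $n-2<d_{CC}((x,y,z),{\sf 0})\le n$. Then $|(x,y,z)|_{\sf std}=n$.
   Context: Exponential coordinates on $H(\mathbb{R})$: $(x,y,z)(x',y',z')=(x+x',y+y',z+z'+\tfrac12(xy'-yx'))$, ${\sf 0}=(0,0,0)$. $H(\mathbb{Z})=\{(x,y,z):x,y\in\mathbb{Z},z\in\mathbb{Z}+\epsilon(x,y)\}$ with $\epsilon(x,y)=1/2$ if $x,y$ both odd and $0$ otherwise; ${\sf e}_1=(1,0,0)$, ${\sf e}_2=(0,1,0)$. The CC metric: $d_{CC}({\sf p},{\sf q})$ is the infimum over admissible curves ($\gamma_3'=\tfrac12(\gamma_1\gamma_2'-\gamma_2\gamma_1')$) from ${\sf p}$ to ${\sf q}$ of the $\ell^1$-length of their projection to the $(x,y)$-plane. *)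

theory Defs
  imports "HOL-Analysis.Analysis"
begin

text \<open>Points of H(R) in exponential coordinates, as triples (x, y, z).\<close>
type_synonym heis = "real \<times> real \<times> real"

definition hmul :: "heis \<Rightarrow> heis \<Rightarrow> heis" where
  "hmul p q = (case p of (x, y, z) \<Rightarrow> case q of (x', y', z') \<Rightarrow>
     (x + x', y + y', z + z' + (x * y' - y * x') / 2))"

definition hzero :: heis where "hzero = (0, 0, 0)"

definition eps :: "int \<Rightarrow> int \<Rightarrow> real" where
  "eps x y = (if odd x \<and> odd y then 1/2 else 0)"

definition HZ :: "heis set" where
  "HZ = {(x, y, z). x \<in> \<int> \<and> y \<in> \<int> \<and>
          z - eps \<lfloor>x\<rfloor> \<lfloor>y\<rfloor> \<in> \<int>}"

definition std :: "heis set" where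
  "std = {(1, 0, 0), (-1, 0, 0), (0, 1, 0), (0, -1, 0)}"

definition word_length :: "heis \<Rightarrow> nat" where
  "word_length g = (LEAST n. \<exists>ws. length ws = n \<and> set ws \<subseteq> std \<and>
                                foldr hmul ws hzero = g)"

definition admissible_length :: "heis \<Rightarrow> heis \<Rightarrow> real \<Rightarrow> bool" where
  "admissible_length p q L \<longleftrightarrow>
     (\<exists>g1 g2 :: real \<Rightarrow> real.
        g1 absolutely_integrable_on {0..1} \<and> g2 absolutely_integrable_on {0..1} \<and>
        (let c1 = (\<lambda>t. fst p + integral {0..t} g1);
             c2 = (\<lambda>t. fst (snd p) + integral {0..t} g2);
             c3 = (\<lambda>t. snd (snd p) +
                     integral {0..t} (\<lambda>s. (c1 s * g2 s - c2 s * g1 s) / 2))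
         in (c1 1, c2 1, c3 1) = q \<and>
            L = integral {0..1} (\<lambda>s. \<bar>g1 s\<bar> + \<bar>g2 s\<bar>)))"

definition d_CC :: "heis \<Rightarrow> heis \<Rightarrow> real" where
  "d_CC p q = Inf {L. admissible_length p q L}"

end

theory Submission
  imports Defs
begin

text \<open>The vertical coordinate of a product of generators, and likewise the endpoint of an
  admissible curve, is determined by the signed area swept by the projected path. Both the
  word length and the CC distance are therefore governed by one isoperimetric problem:
  minimise 2 (P + Q) - |x| - |y| over boxes with P \<ge> |x|, Q \<ge> |y| and
  P Q \<ge> z + |x y| / 2. Every admissible curve ending at the identity has a length of this
  form for some real box, which bounds d_CC from below; rounding an optimal box to an integer
  box costs less than 1 in semiperimeter, and a staircase word around the integer box is
  then shorter than d_CC + 2. Conversely every word is an admissible curve of the same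
  length. So the word length and n both lie within 2 of d_CC, and both have the parity of
  x + y.\<close>

section \<open>Words in the generators\<close>

lemma hmul_assoc: "hmul (hmul p q) r = hmul p (hmul q r)"
  by (cases p; cases q; cases r) (simp add: hmul_def field_simps)

lemma hmul_hzero_left [simp]: "hmul hzero p = p"
  by (cases p) (simp add: hmul_def hzero_def)

lemma hmul_hzero_right [simp]: "hmul p hzero = p"
  by (cases p) (simp add: hmul_def hzero_def)

lemma foldr_hmul_append:
  "foldr hmul (ws @ vs) hzero = hmul (foldr hmul ws hzero) (foldr hmul vs hzero)"
  by (induction ws) (simp_all add: hmul_assoc)

lemma foldr_hmul_replicate:
  "foldr hmul (replicate n (a, b, 0)) hzero = (real n * a, real n * b, 0)"
  by (induction n) (auto simp: hmul_def hzero_def field_simps)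

definition spells :: "heis list \<Rightarrow> heis \<Rightarrow> bool" where
  "spells ws g \<longleftrightarrow> set ws \<subseteq> std \<and> foldr hmul ws hzero = g"

lemma word_length_le: "spells ws g \<Longrightarrow> word_length g \<le> length ws"
  unfolding word_length_def spells_def by (rule Least_le) blast

lemma obtain_shortest_spelling:
  assumes "spells ws g"
  obtains vs where "spells vs g" "length vs = word_length g"
proof -
  have "\<exists>n vs. length vs = n \<and> set vs \<subseteq> std \<and> foldr hmul vs hzero = g"
    using assms unfolding spells_def by blast
  from LeastI_ex[OF this] show thesis
    using that unfolding word_length_def spells_def by blast
qed

lemma std_elim:
  assumes "s \<in> std"
  obtains a b :: int where "s = (of_int a, of_int b, 0)" "odd (a + b)"
proof -
  from assms consider "s = (1, 0, 0)" | "s = (-1, 0, 0)" | "s = (0, 1, 0)" | "s = (0, -1, 0)"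
    unfolding std_def by blast
  then show thesis
  proof cases
    case 1 then show ?thesis using that[of 1 0] by simp
  next
    case 2 then show ?thesis using that[of "-1" 0] by simp
  next
    case 3 then show ?thesis using that[of 0 1] by simp
  next
    case 4 then show ?thesis using that[of 0 "-1"] by simp
  qed
qed

lemma spells_parity:
  assumes "spells ws (of_int i, of_int j, z)"
  shows "even (int (length ws) + i + j)"
  using assms
proof (induction ws arbitrary: i j z)
  case Nil
  then show ?case by (simp add: spells_def hzero_def)
next
  case (Cons s ws)
  obtain x' y' z' where rest: "foldr hmul ws hzero = (x', y', z')"
    by (cases "foldr hmul ws hzero") auto
  have "s \<in> std" and ws: "set ws \<subseteq> std" and prod: "hmul s (x', y', z') = (of_int i, of_int j, z)"
    using Cons.prems rest by (auto simp: spells_def)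
  obtain a b :: int where s: "s = (of_int a, of_int b, 0)" and ab: "odd (a + b)"
    by (rule std_elim[OF \<open>s \<in> std\<close>])
  have "x' = of_int (i - a)" "y' = of_int (j - b)"
    using prod by (auto simp: s hmul_def)
  then have "spells ws (of_int (i - a), of_int (j - b), z')"
    using ws rest by (simp add: spells_def)
  then have "even (int (length ws) + (i - a) + (j - b))"
    by (rule Cons.IH)
  moreover have "int (length (s # ws)) = int (length ws) + 1" by simp
  ultimately show ?case using ab by presburger
qed

lemma word_length_parity:
  assumes "spells ws (of_int i, of_int j, z)"
  shows "even (int (word_length (of_int i, of_int j, z)) + i + j)"
  using assms by (metis obtain_shortest_spelling spells_parity)

section \<open>Short words\<close>

definition gen_power :: "real \<Rightarrow> real \<Rightarrow> int \<Rightarrow> heis list" where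
  "gen_power a b k =
     (if 0 \<le> k then replicate (nat k) (a, b, 0) else replicate (nat (- k)) (- a, - b, 0))"

lemma foldr_hmul_gen_power:
  "foldr hmul (gen_power a b k) hzero = (of_int k * a, of_int k * b, 0)"
  using foldr_hmul_replicate[of "nat k" a b] foldr_hmul_replicate[of "nat (- k)" "- a" "- b"]
  by (simp add: gen_power_def)

lemma length_gen_power: "length (gen_power a b k) = nat \<bar>k\<bar>"
  by (simp add: gen_power_def)

lemma set_gen_power_subset_std: "(a, b, 0) \<in> std \<Longrightarrow> set (gen_power a b k) \<subseteq> std"
  by (auto simp: gen_power_def std_def)

definition staircase_word :: "int \<Rightarrow> int \<Rightarrow> int \<Rightarrow> int \<Rightarrow> int \<Rightarrow> heis list" where
  "staircase_word x y a c r =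
     gen_power 0 1 (y - c) @ gen_power 1 0 (a - r) @ [(0, 1, 0)] @ gen_power 1 0 r @
     gen_power 0 1 (c - 1) @ gen_power 1 0 (x - a)"

lemma spells_staircase_word:
  "spells (staircase_word x y a c r)
     (of_int x, of_int y, of_int a * of_int c - of_int r - of_int x * of_int y / 2)"
proof -
  have "foldr hmul [(0::real, 1::real, 0::real)] hzero = (0, 1, 0)" by simp
  then have "foldr hmul (staircase_word x y a c r) hzero =
      (of_int x, of_int y, of_int a * of_int c - of_int r - of_int x * of_int y / 2)"
    unfolding staircase_word_def foldr_hmul_append foldr_hmul_gen_power
    by (simp add: hmul_def field_simps)
  moreover have "set (staircase_word x y a c r) \<subseteq> std"
    using set_gen_power_subset_std[of 1 0] set_gen_power_subset_std[of 0 1]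
    by (simp add: staircase_word_def std_def)
  ultimately show ?thesis by (simp add: spells_def)
qed

lemma length_staircase_word:
  "length (staircase_word x y a c r) =
     nat \<bar>y - c\<bar> + nat \<bar>a - r\<bar> + 1 + nat \<bar>r\<bar> + nat \<bar>c - 1\<bar> + nat \<bar>x - a\<bar>"
  by (simp add: staircase_word_def length_gen_power)

lemma staircase_parameters:
  fixes a b Z :: int
  assumes "1 \<le> Z" "Z \<le> a * b" "0 \<le> b"
  obtains c r where "1 \<le> c" "c \<le> b" "0 \<le> r" "r < a" "a * c - r = Z"
proof -
  have "1 \<le> a"
  proof (rule ccontr)
    assume "\<not> 1 \<le> a"
    then have "a * b \<le> 0" using assms(3) by (simp add: mult_nonpos_nonneg)
    then show False using assms(1,2) by linarith
  qed
  define c where "c = (Z + a - 1) div a"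
  define r where "r = a * c - Z"
  have "Z + a - 1 = a * c + (Z + a - 1) mod a" "0 \<le> (Z + a - 1) mod a" "(Z + a - 1) mod a < a"
    using \<open>1 \<le> a\<close> by (simp_all add: c_def)
  then have r: "0 \<le> r" "r < a" unfolding r_def by linarith+
  have "1 \<le> c"
  proof (rule ccontr)
    assume "\<not> 1 \<le> c"
    then have "a * c \<le> 0" using \<open>1 \<le> a\<close> by (simp add: mult_nonneg_nonpos)
    then show False using r assms(1) unfolding r_def by linarith
  qed
  moreover have "c \<le> b"
  proof (rule ccontr)
    assume "\<not> c \<le> b"
    then have "a * (b + 1) \<le> a * c" using \<open>1 \<le> a\<close> by (simp add: mult_left_mono)
    then show False using r assms(2) unfolding r_def by (simp add: algebra_simps)
  qed
  ultimately show thesis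
    by (rule that[of c r]) (use r in \<open>auto simp: r_def\<close>)
qed

lemma short_word_first_quadrant:
  fixes x y a b Z :: int and z :: real
  assumes "0 \<le> x" "0 \<le> y" "x \<le> a" "y \<le> b" "0 \<le> z"
    and Z: "real_of_int Z = z + real_of_int x * real_of_int y / 2" and "Z \<le> a * b"
  shows "\<exists>ws. spells ws (of_int x, of_int y, z) \<and> int (length ws) \<le> 2 * a + 2 * b - x - y"
proof (cases "Z = 0")
  case True
  have "real_of_int x * real_of_int y \<ge> 0" using assms(1,2) by simp
  then have "z = 0" "real_of_int x * real_of_int y = 0" using Z True \<open>0 \<le> z\<close> by linarith+
  define ws where "ws = gen_power 0 1 y @ gen_power 1 0 x"
  have "foldr hmul ws hzero = (of_int x, of_int y, - real_of_int x * real_of_int y / 2)"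
    unfolding ws_def foldr_hmul_append foldr_hmul_gen_power by (simp add: hmul_def)
  moreover have "set ws \<subseteq> std"
    using set_gen_power_subset_std[of 1 0] set_gen_power_subset_std[of 0 1]
    by (simp add: ws_def std_def)
  ultimately have "spells ws (of_int x, of_int y, z)"
    using \<open>z = 0\<close> \<open>real_of_int x * real_of_int y = 0\<close> by (simp add: spells_def)
  moreover have "int (length ws) \<le> 2 * a + 2 * b - x - y"
    using assms by (simp add: ws_def length_gen_power)
  ultimately show ?thesis by blast
next
  case False
  have "0 \<le> real_of_int x * real_of_int y" using assms(1,2) by simp
  then have "0 \<le> Z" using Z \<open>0 \<le> z\<close> by linarith
  then have "1 \<le> Z" using False by linarith
  moreover have "0 \<le> b" using assms(2,4) by linarith
  ultimately obtain c r where cr: "1 \<le> c" "c \<le> b" "0 \<le> r" "r < a" "a * c - r = Z"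
    using staircase_parameters \<open>Z \<le> a * b\<close> by blast
  have "real_of_int a * real_of_int c - real_of_int r = real_of_int Z"
    using arg_cong[OF cr(5), of real_of_int] by simp
  then have "spells (staircase_word x y a c r) (of_int x, of_int y, z)"
    using spells_staircase_word[of x y a c r] Z by simp
  moreover have "int (length (staircase_word x y a c r)) \<le> 2 * a + 2 * b - x - y"
    using cr assms by (simp add: length_staircase_word abs_if)
  ultimately show ?thesis by blast
qed

definition quarter_turn :: "heis \<Rightarrow> heis" where
  "quarter_turn p = (case p of (x, y, z) \<Rightarrow> (- y, x, z))"

lemma quarter_turn_simp [simp]: "quarter_turn (x, y, z) = (- y, x, z)"
  by (simp add: quarter_turn_def)

lemma quarter_turn_hmul: "quarter_turn (hmul p q) = hmul (quarter_turn p) (quarter_turn q)"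
  by (cases p; cases q) (simp add: hmul_def field_simps)

lemma spells_quarter_turn: "spells ws g \<Longrightarrow> spells (map quarter_turn ws) (quarter_turn g)"
proof (induction ws arbitrary: g)
  case Nil
  then show ?case by (auto simp: spells_def hzero_def)
next
  case (Cons s ws)
  then have "quarter_turn s \<in> std" by (auto simp: spells_def std_def)
  with Cons show ?case by (auto simp: spells_def quarter_turn_hmul)
qed

lemma short_word_quarter_turn:
  "\<exists>ws. spells ws g \<and> int (length ws) \<le> n \<Longrightarrow>
   \<exists>ws. spells ws (quarter_turn g) \<and> int (length ws) \<le> n"
  using spells_quarter_turn by (metis length_map)

lemma short_word:
  fixes x y a b Z :: int and z :: real
  assumes "\<bar>x\<bar> \<le> a" "\<bar>y\<bar> \<le> b" "0 \<le> z"
    and Z: "real_of_int Z = z + real_of_int \<bar>x\<bar> * real_of_int \<bar>y\<bar> / 2" and "Z \<le> a * b"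
  shows "\<exists>ws. spells ws (of_int x, of_int y, z) \<and> int (length ws) \<le> 2 * a + 2 * b - \<bar>x\<bar> - \<bar>y\<bar>"
proof -
  have Z': "real_of_int Z = z + real_of_int \<bar>y\<bar> * real_of_int \<bar>x\<bar> / 2"
    using Z by (simp add: mult.commute)
  have "Z \<le> b * a" using \<open>Z \<le> a * b\<close> by (simp add: mult.commute)
  have word: "\<exists>ws. spells ws (of_int u, of_int v, z) \<and> int (length ws) \<le> 2 * a + 2 * b - \<bar>x\<bar> - \<bar>y\<bar>"
    if "(u = \<bar>x\<bar> \<and> v = \<bar>y\<bar>) \<or> (u = \<bar>y\<bar> \<and> v = \<bar>x\<bar>)" for u v
    using that
  proof
    assume "u = \<bar>x\<bar> \<and> v = \<bar>y\<bar>"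
    then show ?thesis
      using short_word_first_quadrant[of "\<bar>x\<bar>" "\<bar>y\<bar>" a b z Z] assms by simp
  next
    assume "u = \<bar>y\<bar> \<and> v = \<bar>x\<bar>"
    then show ?thesis
      using short_word_first_quadrant[of "\<bar>y\<bar>" "\<bar>x\<bar>" b a z Z] assms Z' \<open>Z \<le> b * a\<close>
      by (simp add: algebra_simps)
  qed
  consider "0 \<le> x" "0 \<le> y" | "x < 0" "0 \<le> y" | "x < 0" "y < 0" | "0 \<le> x" "y < 0"
    by linarith
  then show ?thesis
  proof cases
    case 1
    then show ?thesis using word[of x y] by simp
  next
    case 2
    then show ?thesis using short_word_quarter_turn[OF word[of y "- x"]] by simp
  next
    case 3
    then show ?thesis
      using short_word_quarter_turn[OF short_word_quarter_turn[OF word[of "- x" "- y"]]] by simp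
  next
    case 4
    then show ?thesis
      using short_word_quarter_turn[OF short_word_quarter_turn[OF short_word_quarter_turn[
          OF word[of "- y" x]]]] by simp
  qed
qed

lemma eps_area_Ints:
  fixes x y :: int and z :: real
  assumes "z - eps x y \<in> \<int>"
  shows "z + real_of_int \<bar>x\<bar> * real_of_int \<bar>y\<bar> / 2 \<in> \<int>"
proof -
  have "eps x y + real_of_int \<bar>x * y\<bar> / 2 \<in> \<int>"
  proof (cases "odd x \<and> odd y")
    case True
    then have "odd \<bar>x * y\<bar>" by simp
    then obtain t where "\<bar>x * y\<bar> = 2 * t + 1" by (rule oddE)
    then have "eps x y + real_of_int \<bar>x * y\<bar> / 2 = of_int (t + 1)"
      using True by (simp add: eps_def field_simps)
    then show ?thesis by simp
  next
    case False
    then have "even \<bar>x * y\<bar>" by auto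
    then obtain t where "\<bar>x * y\<bar> = 2 * t" by (rule evenE)
    then have "eps x y + real_of_int \<bar>x * y\<bar> / 2 = of_int t"
      using False by (simp add: eps_def)
    then show ?thesis by simp
  qed
  from Ints_add[OF assms this] show ?thesis by (simp add: abs_mult)
qed

lemma exists_spelling:
  fixes x y :: int and z :: real
  assumes "0 \<le> z" "z - eps x y \<in> \<int>"
  shows "\<exists>ws. spells ws (of_int x, of_int y, z)"
proof -
  obtain Z :: int where Z: "real_of_int Z = z + real_of_int \<bar>x\<bar> * real_of_int \<bar>y\<bar> / 2"
    using eps_area_Ints[OF assms(2)] by (metis Ints_cases)
  have "0 \<le> real_of_int \<bar>x\<bar> * real_of_int \<bar>y\<bar>" by simp
  then have "0 \<le> Z" using Z \<open>0 \<le> z\<close> by linarith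
  then have "Z \<le> (\<bar>x\<bar> + Z) * (\<bar>y\<bar> + 1)" by (simp add: algebra_simps mult_nonneg_nonneg)
  then show ?thesis using short_word[of x "\<bar>x\<bar> + Z" y "\<bar>y\<bar> + 1" z Z] assms Z \<open>0 \<le> Z\<close> by auto
qed

section \<open>Admissible curves\<close>

lemma has_integral_double_speed:
  fixes f :: "real \<Rightarrow> real"
  assumes "f integrable_on {0..1}" "0 \<le> 2 * t - c" "2 * t - c \<le> 1"
  shows "((\<lambda>s. 2 * f (2 * s - c)) has_integral integral {0..2 * t - c} f) {c / 2..t}"
proof -
  have "f integrable_on {0..2 * t - c}"
    by (rule integrable_subinterval_real[OF assms(1)]) (use assms in auto)
  then have "(f has_integral integral {0..2 * t - c} f) (cbox 0 (2 * t - c))" by auto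
  from has_integral_affinity'[OF this, of 2 "- c"]
  have "((\<lambda>s. f (2 * s - c)) has_integral integral {0..2 * t - c} f / 2) {c / 2..t}"
    by (simp add: field_simps)
  from has_integral_mult_right[OF this, of 2] show ?thesis by simp
qed

text \<open>The velocity of the concatenation of two curves on [0, 1], each run at double speed.\<close>
definition join_density :: "(real \<Rightarrow> real) \<Rightarrow> (real \<Rightarrow> real) \<Rightarrow> real \<Rightarrow> real" where
  "join_density f h s = (if s \<le> 1/2 then 2 * f (2 * s) else 2 * h (2 * s - 1))"

lemma has_integral_join_density:
  fixes f h :: "real \<Rightarrow> real"
  assumes f: "f integrable_on {0..1}" and h: "h integrable_on {0..1}" and t: "0 \<le> t" "t \<le> 1"
  shows "(join_density f h has_integral
           (if t \<le> 1/2 then integral {0..2 * t} f else integral {0..1} f + integral {0..2 * t - 1} h))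
         {0..t}"
proof (cases "t \<le> 1/2")
  case True
  have "((\<lambda>s. 2 * f (2 * s)) has_integral integral {0..2 * t} f) {0..t}"
    using has_integral_double_speed[OF f, of t 0] t True by simp
  then have "(join_density f h has_integral integral {0..2 * t} f) {0..t}"
    by (rule has_integral_eq[rotated]) (use True in \<open>auto simp: join_density_def\<close>)
  then show ?thesis using True by simp
next
  case False
  have "((\<lambda>s. 2 * f (2 * s)) has_integral integral {0..1} f) {0..1/2}"
    using has_integral_double_speed[OF f, of "1/2" 0] by simp
  then have first: "(join_density f h has_integral integral {0..1} f) {0..1/2}"
    by (rule has_integral_eq[rotated]) (auto simp: join_density_def)
  have "((\<lambda>s. 2 * h (2 * s - 1)) has_integral integral {0..2 * t - 1} h) {1 / 2..t}"
    by (rule has_integral_double_speed[OF h]) (use t False in auto)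
  then have second: "(join_density f h has_integral integral {0..2 * t - 1} h) {1/2..t}"
    by (rule has_integral_spike_finite[of "{1/2}", rotated 2]) (auto simp: join_density_def)
  from has_integral_combine[OF _ _ first second] False show ?thesis by simp
qed

lemma integral_join_density:
  fixes f h :: "real \<Rightarrow> real"
  assumes "f integrable_on {0..1}" "h integrable_on {0..1}" "0 \<le> t" "t \<le> 1"
  shows "integral {0..t} (join_density f h) =
    (if t \<le> 1/2 then integral {0..2 * t} f else integral {0..1} f + integral {0..2 * t - 1} h)"
  using has_integral_join_density[OF assms] by (rule integral_unique)

lemma integral_join_density_1:
  fixes f h :: "real \<Rightarrow> real"
  assumes "f integrable_on {0..1}" "h integrable_on {0..1}"
  shows "integral {0..1} (join_density f h) = integral {0..1} f + integral {0..1} h"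
  using integral_join_density[OF assms, of 1] by simp

lemma absolutely_integrable_join_density:
  fixes f h :: "real \<Rightarrow> real"
  assumes f: "f absolutely_integrable_on {0..1}" and h: "h absolutely_integrable_on {0..1}"
  shows "join_density f h absolutely_integrable_on {0..1}"
proof (rule abs_absolutely_integrableI_1)
  show "join_density f h integrable_on {0..1}"
    using has_integral_join_density[of f h 1] f h by (auto simp: absolutely_integrable_on_def)
  have "join_density (\<lambda>s. \<bar>f s\<bar>) (\<lambda>s. \<bar>h s\<bar>) integrable_on {0..1}"
    using has_integral_join_density[of "\<lambda>s. \<bar>f s\<bar>" "\<lambda>s. \<bar>h s\<bar>" 1] f h
    by (auto simp: absolutely_integrable_on_def)
  moreover have "(\<lambda>s. \<bar>join_density f h s\<bar>) = join_density (\<lambda>s. \<bar>f s\<bar>) (\<lambda>s. \<bar>h s\<bar>)"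
    by (simp add: fun_eq_iff join_density_def abs_mult)
  ultimately show "(\<lambda>s. \<bar>join_density f h s\<bar>) integrable_on {0..1}" by simp
qed

lemma absolutely_integrable_continuous_mult:
  fixes c g :: "real \<Rightarrow> real"
  assumes c: "continuous_on {a..b} c" and g: "g absolutely_integrable_on {a..b}"
  shows "(\<lambda>s. c s * g s) absolutely_integrable_on {a..b}"
proof (rule absolutely_integrable_bounded_measurable_product_real[OF _ _ _ g])
  show "c \<in> borel_measurable (lebesgue_on {a..b})"
    by (rule continuous_imp_measurable_on_sets_lebesgue[OF c]) simp
  show "bounded (c ` {a..b})"
    using c compact_continuous_image compact_imp_bounded compact_Icc by blast
qed simp

definition curve_fst :: "heis \<Rightarrow> (real \<Rightarrow> real) \<Rightarrow> real \<Rightarrow> real" where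
  "curve_fst p g1 t = fst p + integral {0..t} g1"

definition curve_snd :: "heis \<Rightarrow> (real \<Rightarrow> real) \<Rightarrow> real \<Rightarrow> real" where
  "curve_snd p g2 t = fst (snd p) + integral {0..t} g2"

definition vertical_velocity :: "heis \<Rightarrow> (real \<Rightarrow> real) \<Rightarrow> (real \<Rightarrow> real) \<Rightarrow> real \<Rightarrow> real" where
  "vertical_velocity p g1 g2 s = (curve_fst p g1 s * g2 s - curve_snd p g2 s * g1 s) / 2"

lemma admissible_length_iff:
  "admissible_length p q L \<longleftrightarrow>
    (\<exists>g1 g2. g1 absolutely_integrable_on {0..1} \<and> g2 absolutely_integrable_on {0..1} \<and>
       (curve_fst p g1 1, curve_snd p g2 1,
        snd (snd p) + integral {0..1} (vertical_velocity p g1 g2)) = q \<and>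
       L = integral {0..1} (\<lambda>s. \<bar>g1 s\<bar> + \<bar>g2 s\<bar>))"
  unfolding admissible_length_def Let_def curve_fst_def curve_snd_def vertical_velocity_def by simp

lemma continuous_on_curve_fst: "g1 integrable_on {0..1} \<Longrightarrow> continuous_on {0..1} (curve_fst p g1)"
  unfolding curve_fst_def by (intro continuous_intros indefinite_integral_continuous_1)

lemma continuous_on_curve_snd: "g2 integrable_on {0..1} \<Longrightarrow> continuous_on {0..1} (curve_snd p g2)"
  unfolding curve_snd_def by (intro continuous_intros indefinite_integral_continuous_1)

lemma integrable_vertical_velocity:
  assumes "g1 absolutely_integrable_on {0..1}" "g2 absolutely_integrable_on {0..1}"
  shows "vertical_velocity p g1 g2 integrable_on {0..1}"
proof -
  have "g1 integrable_on {0..1}" "g2 integrable_on {0..1}"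
    using assms by (simp_all add: absolutely_integrable_on_def)
  then have "(\<lambda>s. curve_fst p g1 s * g2 s) integrable_on {0..1}"
    "(\<lambda>s. curve_snd p g2 s * g1 s) integrable_on {0..1}"
    using absolutely_integrable_continuous_mult[OF continuous_on_curve_fst assms(2)]
      absolutely_integrable_continuous_mult[OF continuous_on_curve_snd assms(1)]
    by (simp_all add: absolutely_integrable_on_def)
  then show ?thesis
    unfolding vertical_velocity_def by (simp add: integrable_diff)
qed

lemma admissible_length_refl: "admissible_length p p 0"
proof -
  have "vertical_velocity p (\<lambda>s. 0) (\<lambda>s. 0) = (\<lambda>s. 0)"
    by (simp add: fun_eq_iff vertical_velocity_def)
  then show ?thesis unfolding admissible_length_iff
    by (intro exI[of _ "\<lambda>s. 0"]) (cases p, simp add: curve_fst_def curve_snd_def)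
qed

lemma admissible_length_generator:
  assumes "s \<in> std"
  shows "admissible_length s hzero 1"
proof -
  obtain a b where s: "s = (a, b, 0)" and ab: "\<bar>a\<bar> + \<bar>b\<bar> = 1"
    using assms unfolding std_def by auto
  have "vertical_velocity s (\<lambda>t. - a) (\<lambda>t. - b) t = 0" if "0 \<le> t" for t
    using that by (simp add: vertical_velocity_def curve_fst_def curve_snd_def s algebra_simps)
  then have "integral {0..1} (vertical_velocity s (\<lambda>t. - a) (\<lambda>t. - b)) = 0"
    by (metis atLeastAtMost_iff integral_0 Henstock_Kurzweil_Integration.integral_cong)
  then show ?thesis unfolding admissible_length_iff
    by (intro exI[of _ "\<lambda>t. - a"] exI[of _ "\<lambda>t. - b"])
       (simp add: curve_fst_def curve_snd_def s hzero_def ab)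
qed

text \<open>Left translation changes the vertical velocity by a term whose integral is exactly the
  vertical shift in the product formula.\<close>
lemma admissible_length_hmul_left:
  assumes "admissible_length p q L"
  shows "admissible_length (hmul h p) (hmul h q) L"
proof -
  obtain g1 g2 where g: "g1 absolutely_integrable_on {0..1}" "g2 absolutely_integrable_on {0..1}"
    and q: "(curve_fst p g1 1, curve_snd p g2 1,
             snd (snd p) + integral {0..1} (vertical_velocity p g1 g2)) = q"
    and L: "L = integral {0..1} (\<lambda>s. \<bar>g1 s\<bar> + \<bar>g2 s\<bar>)"
    using assms unfolding admissible_length_iff by blast
  obtain h1 h2 h3 where h: "h = (h1, h2, h3)" by (cases h) auto
  obtain p1 p2 p3 where p: "p = (p1, p2, p3)" by (cases p) auto
  have int: "g1 integrable_on {0..1}" "g2 integrable_on {0..1}"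
    using g by (simp_all add: absolutely_integrable_on_def)
  have "vertical_velocity (hmul h p) g1 g2 =
      (\<lambda>s. vertical_velocity p g1 g2 s + (h1 / 2 * g2 s - h2 / 2 * g1 s))"
    by (rule ext) (simp add: vertical_velocity_def curve_fst_def curve_snd_def h p hmul_def
        algebra_simps add_divide_distrib diff_divide_distrib)
  then have "integral {0..1} (vertical_velocity (hmul h p) g1 g2) =
      integral {0..1} (vertical_velocity p g1 g2) + (h1 / 2 * integral {0..1} g2 - h2 / 2 * integral {0..1} g1)"
    using int integrable_vertical_velocity[OF g]
    by (simp add: integral_add integral_diff integrable_diff integrable_on_mult_right)
  then have "(curve_fst (hmul h p) g1 1, curve_snd (hmul h p) g2 1,
      snd (snd (hmul h p)) + integral {0..1} (vertical_velocity (hmul h p) g1 g2)) = hmul h q"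
    using q[symmetric] by (simp add: curve_fst_def curve_snd_def h p hmul_def field_simps)
  then show ?thesis unfolding admissible_length_iff using g L by blast
qed

lemma curve_fst_join_density:
  assumes "g1 integrable_on {0..1}" "h1 integrable_on {0..1}" "fst q = curve_fst p g1 1"
    and "0 \<le> t" "t \<le> 1"
  shows "curve_fst p (join_density g1 h1) t =
    (if t \<le> 1/2 then curve_fst p g1 (2 * t) else curve_fst q h1 (2 * t - 1))"
  using assms integral_join_density[OF assms(1,2,4,5)] by (simp add: curve_fst_def)

lemma curve_snd_join_density:
  assumes "g2 integrable_on {0..1}" "h2 integrable_on {0..1}" "fst (snd q) = curve_snd p g2 1"
    and "0 \<le> t" "t \<le> 1"
  shows "curve_snd p (join_density g2 h2) t =
    (if t \<le> 1/2 then curve_snd p g2 (2 * t) else curve_snd q h2 (2 * t - 1))"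
  using assms integral_join_density[OF assms(1,2,4,5)] by (simp add: curve_snd_def)

lemma vertical_velocity_join_density:
  assumes "g1 integrable_on {0..1}" "h1 integrable_on {0..1}" "fst q = curve_fst p g1 1"
    and "g2 integrable_on {0..1}" "h2 integrable_on {0..1}" "fst (snd q) = curve_snd p g2 1"
    and "0 \<le> t" "t \<le> 1"
  shows "vertical_velocity p (join_density g1 h1) (join_density g2 h2) t =
    join_density (vertical_velocity p g1 g2) (vertical_velocity q h1 h2) t"
  using curve_fst_join_density[OF assms(1-3,7,8)] curve_snd_join_density[OF assms(4-8)]
  by (simp add: vertical_velocity_def join_density_def field_simps)

lemma admissible_length_trans:
  assumes "admissible_length p q L1" "admissible_length q r L2"
  shows "admissible_length p r (L1 + L2)"
proof -
  obtain g1 g2 where g: "g1 absolutely_integrable_on {0..1}" "g2 absolutely_integrable_on {0..1}"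
    and q: "(curve_fst p g1 1, curve_snd p g2 1,
             snd (snd p) + integral {0..1} (vertical_velocity p g1 g2)) = q"
    and L1: "L1 = integral {0..1} (\<lambda>s. \<bar>g1 s\<bar> + \<bar>g2 s\<bar>)"
    using assms(1) unfolding admissible_length_iff by blast
  obtain h1 h2 where h: "h1 absolutely_integrable_on {0..1}" "h2 absolutely_integrable_on {0..1}"
    and r: "(curve_fst q h1 1, curve_snd q h2 1,
             snd (snd q) + integral {0..1} (vertical_velocity q h1 h2)) = r"
    and L2: "L2 = integral {0..1} (\<lambda>s. \<bar>h1 s\<bar> + \<bar>h2 s\<bar>)"
    using assms(2) unfolding admissible_length_iff by blast
  have int: "g1 integrable_on {0..1}" "g2 integrable_on {0..1}"
    "h1 integrable_on {0..1}" "h2 integrable_on {0..1}"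
    using g h by (simp_all add: absolutely_integrable_on_def)
  have q12: "fst q = curve_fst p g1 1" "fst (snd q) = curve_snd p g2 1"
    using q by auto
  define G1 where "G1 = join_density g1 h1"
  define G2 where "G2 = join_density g2 h2"
  have "integral {0..1} (vertical_velocity p G1 G2) =
      integral {0..1} (join_density (vertical_velocity p g1 g2) (vertical_velocity q h1 h2))"
    unfolding G1_def G2_def
    by (intro Henstock_Kurzweil_Integration.integral_cong vertical_velocity_join_density)
       (use int q12 in auto)
  also have "\<dots> = integral {0..1} (vertical_velocity p g1 g2) + integral {0..1} (vertical_velocity q h1 h2)"
    using integrable_vertical_velocity g h by (simp add: integral_join_density_1)
  finally have ends: "(curve_fst p G1 1, curve_snd p G2 1,
      snd (snd p) + integral {0..1} (vertical_velocity p G1 G2)) = r"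
    using curve_fst_join_density[OF int(1,3) q12(1), of 1]
      curve_snd_join_density[OF int(2,4) q12(2), of 1] q r
    by (auto simp: G1_def G2_def)
  have "(\<lambda>s. \<bar>G1 s\<bar> + \<bar>G2 s\<bar>) =
      join_density (\<lambda>s. \<bar>g1 s\<bar> + \<bar>g2 s\<bar>) (\<lambda>s. \<bar>h1 s\<bar> + \<bar>h2 s\<bar>)"
    by (simp add: fun_eq_iff G1_def G2_def join_density_def abs_mult)
  then have length: "integral {0..1} (\<lambda>s. \<bar>G1 s\<bar> + \<bar>G2 s\<bar>) = L1 + L2"
    using g h unfolding L1 L2
    by (simp add: integral_join_density_1 absolutely_integrable_on_def integrable_add)
  have "G1 absolutely_integrable_on {0..1}" "G2 absolutely_integrable_on {0..1}"
    unfolding G1_def G2_def using absolutely_integrable_join_density g h by auto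
  with ends length show ?thesis
    unfolding admissible_length_iff by (intro exI[of _ G1] exI[of _ G2]) simp
qed

lemma admissible_length_word:
  assumes "spells ws g"
  shows "admissible_length g hzero (real (length ws))"
  using assms
proof (induction ws arbitrary: g)
  case Nil
  then show ?case using admissible_length_refl by (simp add: spells_def)
next
  case (Cons s ws)
  then have "s \<in> std" and rest: "spells ws (foldr hmul ws hzero)" and g: "g = hmul s (foldr hmul ws hzero)"
    by (auto simp: spells_def)
  have "admissible_length g (hmul s hzero) (real (length ws))"
    unfolding g by (rule admissible_length_hmul_left[OF Cons.IH[OF rest]])
  from admissible_length_trans[OF this[simplified] admissible_length_generator[OF \<open>s \<in> std\<close>]]
  show ?case by (simp add: add.commute)
qed

lemma admissible_length_nonneg: "admissible_length p q L \<Longrightarrow> 0 \<le> L"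
  unfolding admissible_length_iff
  by (auto intro!: integral_nonneg integrable_add simp: absolutely_integrable_on_def)

lemma d_CC_le: "admissible_length p q L \<Longrightarrow> d_CC p q \<le> L"
  unfolding d_CC_def by (rule cInf_lower) (auto intro: bdd_belowI admissible_length_nonneg)

lemma le_d_CC:
  assumes "admissible_length p q L" "\<And>L. admissible_length p q L \<Longrightarrow> c \<le> L"
  shows "c \<le> d_CC p q"
  unfolding d_CC_def using assms by (intro cInf_greatest) auto

lemma d_CC_le_word_length:
  assumes "spells ws g"
  shows "d_CC g hzero \<le> real (word_length g)"
proof -
  obtain vs where "spells vs g" "length vs = word_length g"
    using assms by (rule obtain_shortest_spelling)
  then show ?thesis using admissible_length_word d_CC_le by metis
qed

section \<open>Lengths of curves\<close>

lemma abs_integral_diff_le: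
  fixes g :: "real \<Rightarrow> real"
  assumes g: "g absolutely_integrable_on {0..1}" and "0 \<le> u" "u \<le> v" "v \<le> 1"
  shows "\<bar>integral {0..v} g - integral {0..u} g\<bar> \<le> integral {u..v} (\<lambda>s. \<bar>g s\<bar>)"
proof -
  have int: "g integrable_on {0..1}" "(\<lambda>s. \<bar>g s\<bar>) integrable_on {0..1}"
    using g by (simp_all add: absolutely_integrable_on_def)
  have "integral {0..u} g + integral {u..v} g = integral {0..v} g"
    by (rule Henstock_Kurzweil_Integration.integral_combine)
       (use assms in \<open>auto intro: integrable_subinterval_real[OF int(1)]\<close>)
  moreover have "norm (integral {u..v} g) \<le> integral {u..v} (\<lambda>s. \<bar>g s\<bar>)"
    by (rule integral_norm_bound_integral)
       (use assms in \<open>auto intro: integrable_subinterval_real[OF int(1)] integrable_subinterval_real[OF int(2)]\<close>)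
  ultimately show ?thesis by simp
qed

lemma primitive_variation_le:
  fixes g :: "real \<Rightarrow> real"
  assumes g: "g absolutely_integrable_on {0..1}" and "0 \<le> u" "u \<le> v" "v \<le> 1"
  shows "\<bar>integral {0..u} g\<bar> + \<bar>integral {0..v} g - integral {0..u} g\<bar>
          + \<bar>integral {0..1} g - integral {0..v} g\<bar> \<le> integral {0..1} (\<lambda>s. \<bar>g s\<bar>)"
proof -
  have int: "(\<lambda>s. \<bar>g s\<bar>) integrable_on {0..1}" using g by (simp add: absolutely_integrable_on_def)
  have "integral {0..u} (\<lambda>s. \<bar>g s\<bar>) + integral {u..v} (\<lambda>s. \<bar>g s\<bar>) = integral {0..v} (\<lambda>s. \<bar>g s\<bar>)"
    by (rule Henstock_Kurzweil_Integration.integral_combine)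
       (use assms in \<open>auto intro: integrable_subinterval_real[OF int]\<close>)
  moreover have "integral {0..v} (\<lambda>s. \<bar>g s\<bar>) + integral {v..1} (\<lambda>s. \<bar>g s\<bar>) = integral {0..1} (\<lambda>s. \<bar>g s\<bar>)"
    by (rule Henstock_Kurzweil_Integration.integral_combine[OF _ _ int]) (use assms in auto)
  moreover have "\<bar>integral {0..u} g - integral {0..0} g\<bar> \<le> integral {0..u} (\<lambda>s. \<bar>g s\<bar>)"
    by (rule abs_integral_diff_le[OF g]) (use assms in auto)
  moreover have "\<bar>integral {0..v} g - integral {0..u} g\<bar> \<le> integral {u..v} (\<lambda>s. \<bar>g s\<bar>)"
    by (rule abs_integral_diff_le[OF g]) (use assms in auto)
  moreover have "\<bar>integral {0..1} g - integral {0..v} g\<bar> \<le> integral {v..1} (\<lambda>s. \<bar>g s\<bar>)"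
    by (rule abs_integral_diff_le[OF g]) (use assms in auto)
  ultimately show ?thesis by simp
qed

text \<open>The primitive x + integral {0..t} g starts at x, passes through its values at t1 and t2
  and ends at 0, and all of this is paid for by the total variation.\<close>
lemma primitive_rise_le:
  fixes g :: "real \<Rightarrow> real"
  assumes g: "g absolutely_integrable_on {0..1}" and ends: "x + integral {0..1} g = 0"
    and "t1 \<in> {0..1}" "t2 \<in> {0..1}"
  shows "2 * (integral {0..t2} g - integral {0..t1} g) \<le> integral {0..1} (\<lambda>s. \<bar>g s\<bar>) + \<bar>x\<bar>"
proof (cases "t1 \<le> t2")
  case True
  then have "\<bar>integral {0..t1} g\<bar> + \<bar>integral {0..t2} g - integral {0..t1} g\<bar>
      + \<bar>integral {0..1} g - integral {0..t2} g\<bar> \<le> integral {0..1} (\<lambda>s. \<bar>g s\<bar>)"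
    using primitive_variation_le[OF g, of t1 t2] assms(3,4) by simp
  then show ?thesis using ends by argo
next
  case False
  then have "\<bar>integral {0..t2} g\<bar> + \<bar>integral {0..t1} g - integral {0..t2} g\<bar>
      + \<bar>integral {0..1} g - integral {0..t1} g\<bar> \<le> integral {0..1} (\<lambda>s. \<bar>g s\<bar>)"
    using primitive_variation_le[OF g, of t2 t1] assms(3,4) by simp
  then show ?thesis using ends by argo
qed

lemma primitive_range:
  fixes g :: "real \<Rightarrow> real"
  assumes g: "g absolutely_integrable_on {0..1}" and ends: "x + integral {0..1} g = 0"
  obtains a b where "a \<le> 0" "a \<le> x" "0 \<le> b" "x \<le> b"
    "\<And>t. t \<in> {0..1} \<Longrightarrow> a \<le> x + integral {0..t} g \<and> x + integral {0..t} g \<le> b"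
    "2 * (b - a) \<le> integral {0..1} (\<lambda>s. \<bar>g s\<bar>) + \<bar>x\<bar>"
proof -
  define c where "c t = x + integral {0..t} g" for t
  have cont: "continuous_on {0..1} c"
    using g unfolding c_def absolutely_integrable_on_def
    by (intro continuous_intros indefinite_integral_continuous_1) auto
  obtain t1 where t1: "t1 \<in> {0..1}" and min: "\<forall>s\<in>{0..1}. c t1 \<le> c s"
    using continuous_attains_inf[OF compact_Icc _ cont] by auto
  obtain t2 where t2: "t2 \<in> {0..1}" and max: "\<forall>s\<in>{0..1}. c s \<le> c t2"
    using continuous_attains_sup[OF compact_Icc _ cont] by auto
  have "c 0 = x" "c 1 = 0" using ends by (simp_all add: c_def)
  show thesis
  proof (rule that[of "c t1" "c t2"])
    have "c t1 \<le> c 0" "c t1 \<le> c 1" "c 0 \<le> c t2" "c 1 \<le> c t2"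
      using min max by auto
    then show "c t1 \<le> 0" "c t1 \<le> x" "0 \<le> c t2" "x \<le> c t2"
      using \<open>c 0 = x\<close> \<open>c 1 = 0\<close> by simp_all
    show "c t1 \<le> x + integral {0..t} g \<and> x + integral {0..t} g \<le> c t2" if "t \<in> {0..1}" for t
      using min max that unfolding c_def by blast
    show "2 * (c t2 - c t1) \<le> integral {0..1} (\<lambda>s. \<bar>g s\<bar>) + \<bar>x\<bar>"
      using primitive_rise_le[OF g ends t1 t2] by (simp add: c_def)
  qed
qed

lemma abs_integral_mult_sub_midpoint_le:
  fixes c g :: "real \<Rightarrow> real"
  assumes c: "continuous_on {0..1} c" and g: "g absolutely_integrable_on {0..1}"
    and range: "\<And>s. s \<in> {0..1} \<Longrightarrow> a \<le> c s \<and> c s \<le> b"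
  shows "\<bar>integral {0..1} (\<lambda>s. c s * g s) - (a + b) / 2 * integral {0..1} g\<bar>
          \<le> (b - a) / 2 * integral {0..1} (\<lambda>s. \<bar>g s\<bar>)"
proof -
  have int: "g integrable_on {0..1}" "(\<lambda>s. \<bar>g s\<bar>) integrable_on {0..1}"
    using g by (simp_all add: absolutely_integrable_on_def)
  have "continuous_on {0..1} (\<lambda>s. c s - (a + b) / 2)" by (intro continuous_intros c)
  then have "(\<lambda>s. (c s - (a + b) / 2) * g s) integrable_on {0..1}"
    using absolutely_integrable_continuous_mult[OF _ g] by (simp add: absolutely_integrable_on_def)
  moreover have "(\<lambda>s. c s * g s) integrable_on {0..1}"
    using absolutely_integrable_continuous_mult[OF c g] by (simp add: absolutely_integrable_on_def)
  ultimately have "integral {0..1} (\<lambda>s. (c s - (a + b) / 2) * g s) =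
      integral {0..1} (\<lambda>s. c s * g s) - (a + b) / 2 * integral {0..1} g"
    using int by (simp add: left_diff_distrib integral_diff integrable_on_mult_right)
  moreover have "norm (integral {0..1} (\<lambda>s. (c s - (a + b) / 2) * g s))
      \<le> integral {0..1} (\<lambda>s. (b - a) / 2 * \<bar>g s\<bar>)"
  proof (rule integral_norm_bound_integral)
    show "(\<lambda>s. (b - a) / 2 * \<bar>g s\<bar>) integrable_on {0..1}"
      using int by (simp add: integrable_on_mult_right)
    fix s :: real
    assume "s \<in> {0..1}"
    then have "\<bar>c s - (a + b) / 2\<bar> \<le> (b - a) / 2"
      unfolding abs_le_iff using range by (auto simp: field_simps)
    from mult_right_mono[OF this abs_ge_zero[of "g s"]]
    show "norm ((c s - (a + b) / 2) * g s) \<le> (b - a) / 2 * \<bar>g s\<bar>"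
      by (simp add: abs_mult)
  qed fact
  ultimately show ?thesis by simp
qed

lemma midpoint_mult_le:
  fixes a b x y :: real
  assumes "a \<le> 0" "a \<le> x" "0 \<le> b" "x \<le> b"
  shows "(a + b) / 2 * y \<le> (b - a) / 2 * \<bar>y\<bar> + min 0 (x * y)"
proof (cases "0 \<le> y")
  case True
  then have "a * y \<le> 0" "a * y \<le> x * y"
    using assms by (simp_all add: mult_nonpos_nonneg mult_right_mono)
  moreover have "(a + b) / 2 * y = (b - a) / 2 * \<bar>y\<bar> + a * y" using True by (simp add: field_simps)
  ultimately show ?thesis by linarith
next
  case False
  then have "b * y \<le> 0" "b * y \<le> x * y"
    using assms by (simp_all add: mult_nonneg_nonpos mult_right_mono_neg)
  moreover have "(a + b) / 2 * y = (b - a) / 2 * \<bar>y\<bar> + b * y" using False by (simp add: field_simps)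
  ultimately show ?thesis by linarith
qed

lemma area_width_inequality:
  fixes x y z l1 l2 a1 b1 a2 b2 :: real
  assumes range1: "a1 \<le> 0" "a1 \<le> x" "0 \<le> b1" "x \<le> b1"
    and range2: "a2 \<le> 0" "a2 \<le> y" "0 \<le> b2" "y \<le> b2"
    and width1: "2 * (b1 - a1) \<le> l1 + \<bar>x\<bar>" and width2: "2 * (b2 - a2) \<le> l2 + \<bar>y\<bar>"
    and "0 \<le> l1" "0 \<le> l2"
    and area: "2 * z \<le> (b1 - a1) / 2 * l2 + (b2 - a2) / 2 * l1 + (a1 + b1) / 2 * y - (a2 + b2) / 2 * x"
  shows "4 * z + 2 * \<bar>x * y\<bar> \<le> (l1 + \<bar>x\<bar>) * (l2 + \<bar>y\<bar>)"
proof -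
  have "(a1 + b1) / 2 * y \<le> (b1 - a1) / 2 * \<bar>y\<bar> + min 0 (x * y)"
    using midpoint_mult_le[OF range1] .
  moreover have "- ((a2 + b2) / 2 * x) \<le> (b2 - a2) / 2 * \<bar>x\<bar> + min 0 (- (x * y))"
    using midpoint_mult_le[OF range2, of "- x"] by (simp add: mult.commute)
  moreover have "min 0 (x * y) + min 0 (- (x * y)) = - \<bar>x * y\<bar>" by (simp add: min_def abs_if)
  moreover have "(b1 - a1) * (l2 + \<bar>y\<bar>) + (b2 - a2) * (l1 + \<bar>x\<bar>) =
      2 * ((b1 - a1) / 2 * l2) + 2 * ((b2 - a2) / 2 * l1) + 2 * ((b1 - a1) / 2 * \<bar>y\<bar>)
      + 2 * ((b2 - a2) / 2 * \<bar>x\<bar>)"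
    by (simp add: field_simps)
  ultimately have "4 * z + 2 * \<bar>x * y\<bar> \<le> (b1 - a1) * (l2 + \<bar>y\<bar>) + (b2 - a2) * (l1 + \<bar>x\<bar>)"
    using area by linarith
  also have "\<dots> \<le> (l1 + \<bar>x\<bar>) / 2 * (l2 + \<bar>y\<bar>) + (l2 + \<bar>y\<bar>) / 2 * (l1 + \<bar>x\<bar>)"
    using width1 width2 \<open>0 \<le> l1\<close> \<open>0 \<le> l2\<close> by (intro add_mono mult_right_mono) auto
  finally show ?thesis by (simp add: field_simps)
qed

text \<open>By the defining equation of admissible curves, -z is the signed area swept by the
  projected curve, which stays in a box [a1, b1] \<times> [a2, b2]. If l1, l2 are the lengths of
  the two coordinate projections, the sides of that box are at most (l1 + |x|) / 2 and
  (l2 + |y|) / 2, and these are the P and Q of the conclusion.\<close>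
lemma admissible_length_lower_bound:
  fixes x y z L :: real
  assumes "admissible_length (x, y, z) hzero L"
  obtains P Q where "L = 2 * (P + Q) - \<bar>x\<bar> - \<bar>y\<bar>" "\<bar>x\<bar> \<le> P" "\<bar>y\<bar> \<le> Q"
    "z + \<bar>x\<bar> * \<bar>y\<bar> / 2 \<le> P * Q"
proof -
  define p where "p = (x, y, z)"
  obtain g1 g2 where g: "g1 absolutely_integrable_on {0..1}" "g2 absolutely_integrable_on {0..1}"
    and ends: "(curve_fst p g1 1, curve_snd p g2 1,
                snd (snd p) + integral {0..1} (vertical_velocity p g1 g2)) = hzero"
    and L: "L = integral {0..1} (\<lambda>s. \<bar>g1 s\<bar> + \<bar>g2 s\<bar>)"
    using assms unfolding admissible_length_iff p_def by blast
  have int: "g1 integrable_on {0..1}" "g2 integrable_on {0..1}"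
    "(\<lambda>s. \<bar>g1 s\<bar>) integrable_on {0..1}" "(\<lambda>s. \<bar>g2 s\<bar>) integrable_on {0..1}"
    using g by (simp_all add: absolutely_integrable_on_def)
  define l1 where "l1 = integral {0..1} (\<lambda>s. \<bar>g1 s\<bar>)"
  define l2 where "l2 = integral {0..1} (\<lambda>s. \<bar>g2 s\<bar>)"
  have "L = l1 + l2" unfolding L l1_def l2_def using int by (simp add: integral_add)
  have "0 \<le> l1" "0 \<le> l2" unfolding l1_def l2_def using int by (simp_all add: integral_nonneg)
  define c1 where "c1 = curve_fst p g1"
  define c2 where "c2 = curve_snd p g2"
  have c1: "c1 t = x + integral {0..t} g1" and c2: "c2 t = y + integral {0..t} g2" for t
    by (simp_all add: c1_def c2_def curve_fst_def curve_snd_def p_def)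
  have ends1: "x + integral {0..1} g1 = 0" and ends2: "y + integral {0..1} g2 = 0"
    and ends3: "z + integral {0..1} (vertical_velocity p g1 g2) = 0"
    using ends by (simp_all add: curve_fst_def curve_snd_def p_def hzero_def)
  obtain a1 b1 where range1: "a1 \<le> 0" "a1 \<le> x" "0 \<le> b1" "x \<le> b1"
    and bounds1: "\<And>t. t \<in> {0..1} \<Longrightarrow> a1 \<le> c1 t \<and> c1 t \<le> b1"
    and width1: "2 * (b1 - a1) \<le> l1 + \<bar>x\<bar>"
    using primitive_range[OF g(1) ends1] unfolding c1 l1_def by blast
  obtain a2 b2 where range2: "a2 \<le> 0" "a2 \<le> y" "0 \<le> b2" "y \<le> b2"
    and bounds2: "\<And>t. t \<in> {0..1} \<Longrightarrow> a2 \<le> c2 t \<and> c2 t \<le> b2"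
    and width2: "2 * (b2 - a2) \<le> l2 + \<bar>y\<bar>"
    using primitive_range[OF g(2) ends2] unfolding c2 l2_def by blast
  have cont: "continuous_on {0..1} c1" "continuous_on {0..1} c2"
    unfolding c1_def c2_def using int by (simp_all add: continuous_on_curve_fst continuous_on_curve_snd)
  define A1 where "A1 = integral {0..1} (\<lambda>s. c1 s * g2 s)"
  define A2 where "A2 = integral {0..1} (\<lambda>s. c2 s * g1 s)"
  have "(\<lambda>s. c1 s * g2 s) integrable_on {0..1}" "(\<lambda>s. c2 s * g1 s) integrable_on {0..1}"
    using absolutely_integrable_continuous_mult[OF cont(1) g(2)]
      absolutely_integrable_continuous_mult[OF cont(2) g(1)]
    by (simp_all add: absolutely_integrable_on_def)
  then have "integral {0..1} (vertical_velocity p g1 g2) = (A1 - A2) / 2"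
    unfolding A1_def A2_def vertical_velocity_def c1_def c2_def by (simp add: integral_diff)
  then have "2 * z = A2 - A1" using ends3 by simp
  moreover have "integral {0..1} g1 = - x" "integral {0..1} g2 = - y"
    using ends1 ends2 by linarith+
  then have "\<bar>A1 + (a1 + b1) / 2 * y\<bar> \<le> (b1 - a1) / 2 * l2"
    and "\<bar>A2 + (a2 + b2) / 2 * x\<bar> \<le> (b2 - a2) / 2 * l1"
    using abs_integral_mult_sub_midpoint_le[OF cont(1) g(2) bounds1]
      abs_integral_mult_sub_midpoint_le[OF cont(2) g(1) bounds2]
    unfolding A1_def A2_def l1_def l2_def by simp_all
  ultimately have "2 * z \<le> (b1 - a1) / 2 * l2 + (b2 - a2) / 2 * l1 + (a1 + b1) / 2 * y - (a2 + b2) / 2 * x"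
    by argo
  then have "4 * z + 2 * \<bar>x * y\<bar> \<le> (l1 + \<bar>x\<bar>) * (l2 + \<bar>y\<bar>)"
    by (rule area_width_inequality[OF range1 range2 width1 width2 \<open>0 \<le> l1\<close> \<open>0 \<le> l2\<close>])
  moreover have "\<bar>x\<bar> \<le> l1" "\<bar>y\<bar> \<le> l2" using range1 width1 range2 width2 by argo+
  ultimately show thesis
    by (intro that[of "(l1 + \<bar>x\<bar>) / 2" "(l2 + \<bar>y\<bar>) / 2"])
       (auto simp: \<open>L = l1 + l2\<close> abs_mult field_simps)
qed

section \<open>Rounding the optimal box\<close>

lemma integer_box_balanced:
  fixes X Y Z :: int
  assumes "0 \<le> X" "0 \<le> Y" "X\<^sup>2 \<le> Z" "Y\<^sup>2 \<le> Z"
  obtains a b :: int and m :: real where "X \<le> a" "Y \<le> b" "Z \<le> a * b" "real_of_int (a + b) - 1 < m"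
    "\<And>P Q. real_of_int X \<le> P \<Longrightarrow> real_of_int Y \<le> Q \<Longrightarrow> real_of_int Z \<le> P * Q \<Longrightarrow> m \<le> P + Q"
proof -
  have "0 \<le> Z" using assms(3) zero_le_power2[of X] by linarith
  define s where "s = sqrt (real_of_int Z)"
  have "0 \<le> s" "s\<^sup>2 = real_of_int Z" unfolding s_def using \<open>0 \<le> Z\<close> by simp_all
  define k where "k = \<lceil>2 * s\<rceil>"
  have k: "2 * s \<le> real_of_int k" "real_of_int k < 2 * s + 1"
    unfolding k_def by linarith+
  have "real_of_int X \<le> s" "real_of_int Y \<le> s"
    unfolding s_def using assms by (simp_all add: real_le_rsqrt flip: of_int_power of_int_le_iff)
  then have "2 * X \<le> k" "2 * Y \<le> k" using k by linarith+
  have "(2 * s)\<^sup>2 \<le> (real_of_int k)\<^sup>2" using k \<open>0 \<le> s\<close> by (intro power_mono) simp_all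
  then have "real_of_int (4 * Z) \<le> real_of_int (k\<^sup>2)"
    using \<open>s\<^sup>2 = real_of_int Z\<close> by (simp add: power_mult_distrib)
  then have "4 * Z \<le> k\<^sup>2" by (simp only: of_int_le_iff)
  moreover have "k\<^sup>2 - 1 \<le> 4 * (k div 2 * (k - k div 2))"
    by (cases "even k") (auto elim!: evenE oddE simp: power2_eq_square algebra_simps)
  ultimately have "Z \<le> k div 2 * (k - k div 2)" by linarith
  moreover have "2 * s \<le> P + Q"
    if "real_of_int X \<le> P" "real_of_int Y \<le> Q" "real_of_int Z \<le> P * Q" for P Q
  proof -
    have "0 \<le> P" "0 \<le> Q" using that assms(1,2) by linarith+
    then have "sqrt (P * Q) \<le> (P + Q) / 2" by (rule arith_geo_mean_sqrt)
    moreover have "s \<le> sqrt (P * Q)" unfolding s_def using that(3) by simp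
    ultimately show ?thesis by argo
  qed
  ultimately show thesis
    using that[of "k div 2" "k - k div 2" "2 * s"] \<open>2 * X \<le> k\<close> \<open>2 * Y \<le> k\<close> k(2) by simp
qed

lemma integer_box_thin:
  fixes X Y Z :: int
  assumes "0 \<le> X" "0 \<le> Y" "0 \<le> Z" "Z < X\<^sup>2"
  obtains b :: int and m :: real where "Y \<le> b" "Z \<le> X * b" "real_of_int (X + b) - 1 < m"
    "\<And>P Q. real_of_int X \<le> P \<Longrightarrow> real_of_int Y \<le> Q \<Longrightarrow> real_of_int Z \<le> P * Q \<Longrightarrow> m \<le> P + Q"
proof -
  have "X \<noteq> 0" using assms(3,4) by auto
  then have "0 < X" using assms(1) by simp
  define r where "r = real_of_int Z / real_of_int X"
  define b where "b = max Y \<lceil>r\<rceil>"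
  have "real_of_int Z = real_of_int X * r" unfolding r_def using \<open>0 < X\<close> by simp
  also have "\<dots> \<le> real_of_int X * real_of_int b"
    using \<open>0 < X\<close> unfolding b_def by (intro mult_left_mono) (auto intro: order_trans[OF le_of_int_ceiling])
  finally have "real_of_int Z \<le> real_of_int (X * b)" by simp
  then have "Z \<le> X * b" by (simp only: of_int_le_iff)
  moreover have "real_of_int (X + b) - 1 < real_of_int X + max (real_of_int Y) r"
    unfolding b_def using ceiling_correct[of r] by (auto simp: max_def)
  moreover have "real_of_int X + max (real_of_int Y) r \<le> P + Q"
    if P: "real_of_int X \<le> P" and Q: "real_of_int Y \<le> Q" and PQ: "real_of_int Z \<le> P * Q" for P Q
  proof -
    have "0 < P" using P \<open>0 < X\<close> by linarith
    have "real_of_int Z < real_of_int X * real_of_int X"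
      using assms(4) by (simp add: power2_eq_square flip: of_int_mult of_int_less_iff)
    also have "\<dots> \<le> P * real_of_int X" using P \<open>0 < X\<close> by (simp add: mult_right_mono)
    finally have "0 \<le> (P - real_of_int X) * (P * real_of_int X - real_of_int Z)"
      using P by (intro mult_nonneg_nonneg) simp_all
    then have "real_of_int X + r \<le> P + real_of_int Z / P"
      unfolding r_def using \<open>0 < P\<close> \<open>0 < X\<close> by (simp add: field_simps)
    also have "real_of_int Z / P \<le> Q" using PQ \<open>0 < P\<close> by (simp add: field_simps mult.commute)
    finally show ?thesis using P Q by linarith
  qed
  moreover have "Y \<le> b" by (simp add: b_def)
  ultimately show thesis using that by blast
qed

text \<open>The real minimum of P + Q is 2 \<surd>Z when X and Y are both at most \<surd>Z, and is
  attained with P = X or Q = Y otherwise.\<close>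
lemma integer_box:
  fixes X Y Z :: int
  assumes "0 \<le> X" "0 \<le> Y" "0 \<le> Z"
  obtains a b :: int and m :: real where "X \<le> a" "Y \<le> b" "Z \<le> a * b" "real_of_int (a + b) - 1 < m"
    "\<And>P Q. real_of_int X \<le> P \<Longrightarrow> real_of_int Y \<le> Q \<Longrightarrow> real_of_int Z \<le> P * Q \<Longrightarrow> m \<le> P + Q"
proof -
  consider "X\<^sup>2 \<le> Z" "Y\<^sup>2 \<le> Z" | "Z < X\<^sup>2" | "Z < Y\<^sup>2" by linarith
  then show thesis
  proof cases
    case 1
    with assms show thesis using that integer_box_balanced by blast
  next
    case 2
    with assms show thesis using that[of X] integer_box_thin[of X Y Z] by auto
  next
    case 3
    then obtain b m where "X \<le> b" "Z \<le> Y * b" "real_of_int (Y + b) - 1 < m"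
      and min: "\<And>P Q. real_of_int Y \<le> P \<Longrightarrow> real_of_int X \<le> Q \<Longrightarrow> real_of_int Z \<le> P * Q \<Longrightarrow> m \<le> P + Q"
      using integer_box_thin[of Y X Z] assms by blast
    moreover have "m \<le> P + Q"
      if "real_of_int X \<le> P" "real_of_int Y \<le> Q" "real_of_int Z \<le> P * Q" for P Q
      using min[of Q P] that by (simp add: mult.commute add.commute)
    ultimately show thesis using that[of b Y m] by (simp add: mult.commute add.commute)
  qed
qed

lemma word_length_lt_d_CC:
  fixes x y :: int and z :: real
  assumes "0 \<le> z" "z - eps x y \<in> \<int>"
  shows "real (word_length (of_int x, of_int y, z)) < d_CC (of_int x, of_int y, z) hzero + 2"
proof -
  obtain Z :: int where Z: "real_of_int Z = z + real_of_int \<bar>x\<bar> * real_of_int \<bar>y\<bar> / 2"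
    using eps_area_Ints[OF assms(2)] by (metis Ints_cases)
  have "0 \<le> real_of_int \<bar>x\<bar> * real_of_int \<bar>y\<bar>" by simp
  then have "0 \<le> Z" using Z \<open>0 \<le> z\<close> by linarith
  then obtain a b m where box: "\<bar>x\<bar> \<le> a" "\<bar>y\<bar> \<le> b" "Z \<le> a * b" "real_of_int (a + b) - 1 < m"
    and min: "\<And>P Q. real_of_int \<bar>x\<bar> \<le> P \<Longrightarrow> real_of_int \<bar>y\<bar> \<le> Q \<Longrightarrow> real_of_int Z \<le> P * Q \<Longrightarrow> m \<le> P + Q"
    using integer_box[of "\<bar>x\<bar>" "\<bar>y\<bar>" Z] by auto
  obtain ws where ws: "spells ws (of_int x, of_int y, z)"
    and len: "int (length ws) \<le> 2 * a + 2 * b - \<bar>x\<bar> - \<bar>y\<bar>"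
    using short_word[OF box(1,2) \<open>0 \<le> z\<close> Z box(3)] by blast
  have "2 * m - \<bar>x\<bar> - \<bar>y\<bar> \<le> d_CC (of_int x, of_int y, z) hzero"
  proof (rule le_d_CC[OF admissible_length_word[OF ws]])
    fix L
    assume "admissible_length (of_int x, of_int y, z) hzero L"
    then obtain P Q :: real where "L = 2 * (P + Q) - \<bar>of_int x\<bar> - \<bar>of_int y\<bar>"
      "\<bar>of_int x\<bar> \<le> P" "\<bar>of_int y\<bar> \<le> Q" "z + \<bar>of_int x\<bar> * \<bar>of_int y\<bar> / 2 \<le> P * Q"
      by (rule admissible_length_lower_bound) simp
    with min[of P Q] Z show "2 * m - \<bar>x\<bar> - \<bar>y\<bar> \<le> L" by simp
  qed
  moreover have "word_length (of_int x, of_int y, z) \<le> length ws" by (rule word_length_le[OF ws])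
  ultimately show ?thesis using len box(4) by linarith
qed

theorem mainTheorem9:
  fixes x y n :: int and z :: real
  assumes "z \<ge> 0"
    and "z - eps x y \<in> \<int>"
    and "even (n - (x + y))"
    and "real_of_int n - 2 < d_CC (real_of_int x, real_of_int y, z) hzero"
    and "d_CC (real_of_int x, real_of_int y, z) hzero \<le> real_of_int n"
  shows "int (word_length (real_of_int x, real_of_int y, z)) = n"
proof -
  obtain ws where ws: "spells ws (of_int x, of_int y, z)"
    using exists_spelling[OF assms(1,2)] by blast
  have "real (word_length (of_int x, of_int y, z)) < d_CC (of_int x, of_int y, z) hzero + 2"
    using word_length_lt_d_CC[OF assms(1,2)] .
  moreover have "d_CC (of_int x, of_int y, z) hzero \<le> real (word_length (of_int x, of_int y, z))"
    using d_CC_le_word_length[OF ws] .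
  ultimately have "n - 2 < int (word_length (of_int x, of_int y, z))"
    and "int (word_length (of_int x, of_int y, z)) < n + 2"
    using assms(4,5) by linarith+
  moreover have "even (int (word_length (of_int x, of_int y, z)) + x + y)"
    using word_length_parity[OF ws] .
  ultimately show ?thesis using assms(3) by presburger
qed

end
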